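(* There exist absolute constants $\bar\epsilon>0$ and $\delta>0$ such that for all real numbers $a,c$ and $b\ge 0$ satisfying $|ac|\le\bar\epsilon\,b^2$ and $|c|\le\bar\epsilon\,b^{3/2}$ one has $$\det S\ \ge\ \delta\, b^2(a^2+b),\qquad S=\frac13\begin{pmatrix}3&2a&-b\\ 2a&2(a^2+b)&-ab-3c\\ -b&-ab-3c&b^2-2ac\end{pmatrix}.$$ *)

theory Defs
  imports "HOL-Analysis.Analysis"
begin

definition Smat :: "real \<Rightarrow> real \<Rightarrow> real \<Rightarrow> real^3^3" where
  "Smat a b c = (1/3) *\<^sub>R
     vector [vector [3, 2*a, -b],
             vector [2*a, 2*(a^2+b), -a*b - 3*c],
             vector [-b, -a*b - 3*c, b^2 - 2*a*c]]"

end

theory Submission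
  imports Defs
begin

text \<open>Up to the factor 27, det S is the discriminant of the cubic x^3 + a x^2 - b x + c.
  Its two main terms a^2 b^2 + 4 b^3 are comparable to b^2 (a^2 + b), and the hypotheses
  make each of the three terms containing c a small multiple of a^2 b^2 or of b^3.\<close>

lemma det_Smat:
  "det (Smat a b c) = (a^2*b^2 + 4*b^3 - 4*a^3*c - 18*a*b*c - 27*c^2) / 27"
  unfolding Smat_def det_3
  by (simp add: vector_3 field_simps power2_eq_square power3_eq_cube)

lemma power2_powr_three_halves:
  fixes b :: real
  assumes "b \<ge> 0"
  shows "(b powr (3/2))^2 = b^3"
proof (cases "b = 0")
  case False
  then have "(b powr (3/2))^2 = b powr real 3"
    by (simp add: powr_power)
  also have "\<dots> = b^3"
    using assms False by (simp add: powr_realpow)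
  finally show ?thesis .
qed simp

lemma det_Smat_lower_bound:
  fixes a b c eps :: real
  assumes "b \<ge> 0" "eps \<ge> 0"
    and ac: "\<bar>a * c\<bar> \<le> eps * b^2"
    and c: "\<bar>c\<bar> \<le> eps * b powr (3/2)"
  shows "(1 - 4*eps) * (a^2*b^2) + (4 - 18*eps - 27*eps^2) * b^3 \<le> 27 * det (Smat a b c)"
proof -
  have a3c: "4*a^3*c \<le> 4*eps * a^2*b^2"
  proof -
    have "4*a^3*c = 4*a^2 * (a*c)"
      by (simp add: power2_eq_square power3_eq_cube)
    also have "\<dots> \<le> 4*a^2 * (eps * b^2)"
      using ac by (intro mult_left_mono) auto
    finally show ?thesis by (simp add: algebra_simps)
  qed
  have abc: "18*a*b*c \<le> 18*eps * b^3"
  proof -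
    have "18*a*b*c = 18*b * (a*c)" by simp
    also have "\<dots> \<le> 18*b * (eps * b^2)"
      using ac \<open>b \<ge> 0\<close> by (intro mult_left_mono) auto
    finally show ?thesis by (simp add: algebra_simps power3_eq_cube power2_eq_square)
  qed
  have c2: "27*c^2 \<le> 27*eps^2 * b^3"
  proof -
    have "c^2 = \<bar>c\<bar>^2" by simp
    also have "\<dots> \<le> (eps * b powr (3/2))^2"
      using c by (intro power_mono) auto
    also have "\<dots> = eps^2 * b^3"
      using power2_powr_three_halves[OF \<open>b \<ge> 0\<close>] by (simp add: power_mult_distrib)
    finally show ?thesis by simp
  qed
  show ?thesis
    using a3c abc c2 unfolding det_Smat by (simp add: algebra_simps)
qed

theorem mainTheorem3:
  shows "\<exists>eps::real. \<exists>\<delta>::real. eps > 0 \<and> \<delta> > 0 \<and>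
    (\<forall>a b c :: real. b \<ge> 0 \<longrightarrow> \<bar>a * c\<bar> \<le> eps * b^2 \<longrightarrow> \<bar>c\<bar> \<le> eps * b powr (3/2) \<longrightarrow>
       det (Smat a b c) \<ge> \<delta> * b^2 * (a^2 + b))"
proof (rule exI[of _ "1/100"], rule exI[of _ "1/30"], intro conjI allI impI)
  fix a b c :: real
  assume b: "b \<ge> 0" and ac: "\<bar>a * c\<bar> \<le> 1/100 * b^2"
    and c: "\<bar>c\<bar> \<le> 1/100 * b powr (3/2)"
  have "(24/25) * (a^2*b^2) + (38173/10000) * b^3 \<le> 27 * det (Smat a b c)"
    using det_Smat_lower_bound[OF b _ ac c] by (simp add: power_divide)
  moreover have "27 * (1/30 * b^2 * (a^2 + b)) = (9/10) * (a^2*b^2) + (9/10) * b^3"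
    by (simp add: algebra_simps power3_eq_cube power2_eq_square)
  moreover have "0 \<le> a^2*b^2" "0 \<le> b^3"
    using b by simp_all
  ultimately show "1/30 * b^2 * (a^2 + b) \<le> det (Smat a b c)"
    by linarith
qed simp_all

end
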